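(* The functions $c\mapsto h_1(c)+2h_2(c)$ and $c\mapsto h_2(c)$ are increasing on the interval $I_A=[c_*,\bar c]$, where $c_*=\frac2{\sqrt3}$ and $\bar c=e^{\frac{1.3065-1}{2}}$.
   Context: Let $K(R)=\frac{\exp(\frac{R^2-1}{2})}{R}$ for $R>0$ (strictly decreasing on $(0,1]$, strictly increasing on $[1,\infty)$, $K(1)=1$). For $s\ge1$ let $R^-(s)\in(0,1]$, $R^+(s)\in[1,\infty)$ be the solutions of $K(R)=s$. For $c\ge c_*$ define $h_1(c)=\int_{\pi/3}^{2\pi/3}\frac{d\psi}{1-[R^-(c\sin\psi)]^2}$ and $h_2(c)=\int_{R^-(\frac{\sqrt3}{2}c)}^{R^+(\frac{\sqrt3}{2}c)}\frac{K(R)\,dR}{R\sqrt{c^2-K(R)^2}}$. *)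

theory Defs
  imports "HOL-Analysis.Analysis"
begin

definition K :: "real \<Rightarrow> real" where
  "K R = exp ((R^2 - 1) / 2) / R"

text \<open>For s \<ge> 1: the solution of K R = s in (0,1], resp. in [1,\<infinity>).\<close>
definition R_minus :: "real \<Rightarrow> real" where
  "R_minus s = (THE R. 0 < R \<and> R \<le> 1 \<and> K R = s)"

definition R_plus :: "real \<Rightarrow> real" where
  "R_plus s = (THE R. 1 \<le> R \<and> K R = s)"

definition h1 :: "real \<Rightarrow> real" where
  "h1 c = integral {pi/3 .. 2*pi/3} (\<lambda>\<psi>. 1 / (1 - (R_minus (c * sin \<psi>))^2))"

definition h2 :: "real \<Rightarrow> real" where
  "h2 c = integral {R_minus (sqrt 3 / 2 * c) .. R_plus (sqrt 3 / 2 * c)}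
            (\<lambda>R. K R / (R * sqrt (c^2 - (K R)^2)))"

definition c_star :: real where
  "c_star = 2 / sqrt 3"

definition c_bar :: real where
  "c_bar = exp ((13065 / 10000 - 1) / 2)"

end

theory Submission
  imports Defs
begin

(*
  Put s = sqrt 3 / 2 * c.  On I_A we have 1 <= s <= 1.0096, so R_minus s lies in [0.9, 1] and
  R_plus s in [1, 1.105], where |K'| <= 1/4: when c grows, both ends of the integral defining h2
  move outwards at least four times as fast as s.  Split h2 at R = 1.  On the newly covered
  pieces the integrand K R / (R sqrt (c^2 - K R^2)) is at least 1 / (R c), while on the old pieces
  it decreases only by O(dc); so the left part of h2 increases and the right part increases at
  rate at least 2.

  For h1, substitute s = c sin psi in h1/2 = int_{pi/3}^{pi/2} and s = K R in the left part of
  h2, then t = (s - 1)/(c - 1).  Their sum becomes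

    int_0^1 rho ((c - 1) t) / sqrt (t (1 - t) (c + 1 + (c - 1) t)) dt,
    rho x = sqrt x / (1 - R_minus (1 + x)^2).

  As rho x ^ 2 = (K R - 1) / (1 - R^2)^2 for R = R_minus (1 + x), which is decreasing in R, rho is
  increasing and bounded by 0.74; hence the sum decreases at rate at most 0.94.  Since h1 + 2 h2 is
  twice this sum plus twice the right part of h2, it increases.
*)

section \<open>The function K and the branches of its inverse\<close>

lemma K_pos: "0 < R \<Longrightarrow> 0 < K R"
  by (simp add: K_def)

lemma K_1 [simp]: "K 1 = 1"
  by (simp add: K_def)

lemma DERIV_K: "0 < R \<Longrightarrow> (K has_real_derivative K R * (R^2 - 1) / R) (at R)"
  unfolding K_def[abs_def]
  by (rule derivative_eq_intros refl | simp)+ (simp add: field_simps power2_eq_square)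

lemma isCont_K: "0 < R \<Longrightarrow> isCont K R"
  using DERIV_K DERIV_isCont by blast

lemma continuous_on_K: "0 < a \<Longrightarrow> continuous_on {a..b} K"
  by (intro continuous_at_imp_continuous_on ballI isCont_K) auto

lemma K_strict_decreasing:
  assumes "0 < a" "a < b" "b \<le> 1"
  shows "K b < K a"
proof (rule DERIV_neg_imp_decreasing_open[OF \<open>a < b\<close> _ continuous_on_K[OF \<open>0 < a\<close>]])
  fix x assume x: "a < x" "x < b"
  with assms have "x^2 < 1"
    by (simp add: abs_square_less_1)
  with x assms have "K x * (x^2 - 1) / x < 0"
    by (simp add: K_pos divide_neg_pos mult_pos_neg)
  moreover have "(K has_real_derivative K x * (x^2 - 1) / x) (at x)"
    using x assms by (intro DERIV_K) auto
  ultimately show "\<exists>y. (K has_real_derivative y) (at x) \<and> y < 0"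
    by blast
qed

lemma K_strict_increasing:
  assumes "1 \<le> a" "a < b"
  shows "K a < K b"
proof (rule DERIV_pos_imp_increasing_open[OF \<open>a < b\<close> _ continuous_on_K])
  fix x assume x: "a < x" "x < b"
  with assms have "1 < x^2"
    by (simp add: one_less_power)
  with x assms have "0 < K x * (x^2 - 1) / x"
    by (simp add: K_pos)
  moreover have "(K has_real_derivative K x * (x^2 - 1) / x) (at x)"
    using x assms by (intro DERIV_K) auto
  ultimately show "\<exists>y. (K has_real_derivative y) (at x) \<and> 0 < y"
    by blast
qed (use assms in simp)

lemma K_ge_1: "0 < R \<Longrightarrow> 1 \<le> K R"
  using K_strict_decreasing[of R 1] K_strict_increasing[of 1 R]
  by (cases R "1::real" rule: linorder_cases) auto

lemma K_ge:
  assumes "0 < R"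
  shows "(R^2 + 1) / (2 * R) \<le> K R"
proof -
  have "(R^2 + 1) / 2 \<le> exp ((R^2 - 1) / 2)"
    using exp_ge_add_one_self[of "(R^2 - 1) / 2"] by (simp add: field_simps)
  then show ?thesis
    using assms by (simp add: K_def divide_right_mono flip: divide_divide_eq_left)
qed

lemma ex1_K_eq_below_1:
  assumes "1 \<le> s"
  shows "\<exists>!R. 0 < R \<and> R \<le> 1 \<and> K R = s"
proof -
  have "s \<le> s + 1 / (4 * s)"
    using assms by simp
  also have "\<dots> = ((1 / (2 * s))^2 + 1) / (2 * (1 / (2 * s)))"
    using assms by (simp add: field_simps power2_eq_square)
  also have "\<dots> \<le> K (1 / (2 * s))"
    using assms by (intro K_ge) auto
  finally have "s \<le> K (1 / (2 * s))" .
  then obtain R where "1 / (2 * s) \<le> R" "R \<le> 1" "K R = s"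
    using IVT2'[of K 1 s "1 / (2 * s)"] continuous_on_K[of "1 / (2 * s)" 1] assms by auto
  moreover have "R = R'" if "0 < R" "R \<le> 1" "0 < R'" "R' \<le> 1" "K R = K R'" for R R'
    using that K_strict_decreasing[of R R'] K_strict_decreasing[of R' R]
    by (cases R R' rule: linorder_cases) auto
  ultimately show ?thesis
    using assms by (smt (verit) divide_pos_pos)
qed

lemma ex1_K_eq_above_1:
  assumes "1 \<le> s"
  shows "\<exists>!R. 1 \<le> R \<and> K R = s"
proof -
  have "s \<le> s + 1 / (4 * s)"
    using assms by simp
  also have "\<dots> = ((2 * s)^2 + 1) / (2 * (2 * s))"
    using assms by (simp add: field_simps power2_eq_square)
  also have "\<dots> \<le> K (2 * s)"
    using assms by (intro K_ge) auto
  finally have "s \<le> K (2 * s)" .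
  then obtain R where "1 \<le> R" "K R = s"
    using IVT'[of K 1 s "2 * s"] continuous_on_K[of 1 "2 * s"] assms by auto
  moreover have "R = R'" if "1 \<le> R" "1 \<le> R'" "K R = K R'" for R R'
    using that K_strict_increasing[of R R'] K_strict_increasing[of R' R]
    by (cases R R' rule: linorder_cases) auto
  ultimately show ?thesis
    by blast
qed

lemma R_minus_spec:
  assumes "1 \<le> s"
  shows "0 < R_minus s" "R_minus s \<le> 1" "K (R_minus s) = s"
  using theI'[OF ex1_K_eq_below_1[OF assms]] unfolding R_minus_def by auto

lemma R_plus_spec:
  assumes "1 \<le> s"
  shows "1 \<le> R_plus s" "K (R_plus s) = s"
  using theI'[OF ex1_K_eq_above_1[OF assms]] unfolding R_plus_def by auto

lemma R_minus_K: "0 < R \<Longrightarrow> R \<le> 1 \<Longrightarrow> R_minus (K R) = R"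
  unfolding R_minus_def using ex1_K_eq_below_1[OF K_ge_1[of R]] by (rule the1_equality) auto

lemma R_plus_K: "1 \<le> R \<Longrightarrow> R_plus (K R) = R"
  unfolding R_plus_def using ex1_K_eq_above_1[OF K_ge_1[of R]] by (rule the1_equality) auto

lemma R_minus_less_1: "1 < s \<Longrightarrow> R_minus s < 1"
  using R_minus_spec[of s] by (cases "R_minus s = 1") auto

lemma R_minus_antimono: "1 \<le> s \<Longrightarrow> s \<le> s' \<Longrightarrow> R_minus s' \<le> R_minus s"
  using R_minus_spec[of s] R_minus_spec[of s'] K_strict_decreasing[of "R_minus s" "R_minus s'"]
  by force

lemma R_plus_mono: "1 \<le> s \<Longrightarrow> s \<le> s' \<Longrightarrow> R_plus s \<le> R_plus s'"
  using R_plus_spec[of s] R_plus_spec[of s'] K_strict_increasing[of "R_plus s'" "R_plus s"]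
  by force

lemma R_minus_ge: "1 \<le> s \<Longrightarrow> 0 < r \<Longrightarrow> r \<le> 1 \<Longrightarrow> s \<le> K r \<Longrightarrow> r \<le> R_minus s"
  using R_minus_antimono[of s "K r"] R_minus_K[of r] by simp

lemma R_plus_le: "1 \<le> s \<Longrightarrow> 1 \<le> r \<Longrightarrow> s \<le> K r \<Longrightarrow> R_plus s \<le> r"
  using R_plus_mono[of s "K r"] R_plus_K[of r] by simp

lemma K_le_between_roots:
  assumes "1 \<le> s" "R_minus s \<le> R" "R \<le> R_plus s"
  shows "K R \<le> s"
proof (cases "R \<le> 1")
  case True
  then show ?thesis
    using R_minus_spec[OF assms(1)] K_strict_decreasing[of "R_minus s" R] assms
    by (cases "R = R_minus s") auto
next
  case False
  then show ?thesis
    using R_plus_spec[OF assms(1)] K_strict_increasing[of R "R_plus s"] assms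
    by (cases "R = R_plus s") auto
qed

section \<open>Numerical bounds\<close>

lemma exp_ge_Taylor_cubic: "1 + x + x^2 / 2 + x^3 / 6 \<le> exp (x::real)"
proof -
  obtain t where "exp x = (\<Sum>m<4. x^m / fact m) + exp t / fact 4 * x^4"
    using Maclaurin_exp_le[of x 4] by blast
  moreover have "0 \<le> exp t / fact 4 * x^4"
    by (simp add: zero_le_even_power)
  ultimately show ?thesis
    by (simp add: eval_nat_numeral)
qed

lemma exp_le_Taylor_quadratic: "x \<le> 0 \<Longrightarrow> exp x \<le> 1 + x + (x::real)^2 / 2"
proof -
  assume "x \<le> 0"
  obtain t where "exp x = (\<Sum>m<3. x^m / fact m) + exp t / fact 3 * x^3"
    using Maclaurin_exp_le[of x 3] by blast
  moreover have "exp t / fact 3 * x^3 \<le> 0"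
    using \<open>x \<le> 0\<close> by (intro mult_nonneg_nonpos) (auto simp: power_le_zero_eq)
  ultimately show ?thesis
    by (simp add: eval_nat_numeral)
qed

lemma sqrt_3_bounds: "17320/10000 \<le> sqrt 3" "sqrt 3 \<le> 17321/10000"
  by (rule real_le_rsqrt real_le_lsqrt; simp add: power2_eq_square)+

lemma K_numeral_bounds:
  "11657/10000 \<le> K (6/10)" "K (6/10) \<le> 122/100"
  "10096/10000 \<le> K (9/10)" "10096/10000 \<le> K (1105/1000)"
proof -
  have "K (6/10) = exp (-8/25) / (6/10)" "K (9/10) = exp (-19/200) / (9/10)"
    "K (1105/1000) = exp (44205/400000) / (1105/1000)"
    by (simp_all add: K_def power2_eq_square)
  moreover note exp_ge_Taylor_cubic[of "-8/25"] exp_le_Taylor_quadratic[of "-8/25"]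
    exp_ge_Taylor_cubic[of "-19/200"] exp_ge_Taylor_cubic[of "44205/400000"]
  ultimately show
    "11657/10000 \<le> K (6/10)" "K (6/10) \<le> 122/100"
    "10096/10000 \<le> K (9/10)" "10096/10000 \<le> K (1105/1000)"
    by (simp_all add: field_simps power2_eq_square power3_eq_cube)
qed

lemma c_bar_le: "c_bar \<le> 11657/10000"
proof -
  define x :: real where "x = 613/4000"
  define T where "T = 1 - x + x^2 / 2 - x^3 / 6"
  have "T \<le> exp (-x)"
    using exp_ge_Taylor_cubic[of "-x"] by (simp add: T_def)
  moreover have "0 < T"
    by (simp add: T_def x_def power2_eq_square power3_eq_cube)
  moreover have "c_bar = inverse (exp (-x))"
    by (simp add: c_bar_def x_def exp_minus)
  ultimately have "c_bar \<le> inverse T"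
    using le_imp_inverse_le by metis
  also have "\<dots> \<le> 11657/10000"
    by (simp add: T_def x_def power2_eq_square power3_eq_cube)
  finally show ?thesis .
qed

abbreviation \<sigma> :: "real \<Rightarrow> real" where
  "\<sigma> c \<equiv> sqrt 3 / 2 * c"

lemma I_A_bounds:
  assumes "c \<in> {c_star..c_bar}"
  shows "115/100 \<le> c" "c \<le> 11657/10000" "4/3 \<le> c^2"
    "1 \<le> \<sigma> c" "\<sigma> c \<le> 10096/10000" "\<sigma> c < c"
proof -
  have c: "c_star \<le> c" "c \<le> c_bar"
    using assms by auto
  have "c_star^2 \<le> c^2"
    using c by (intro power_mono) (auto simp: c_star_def)
  then show "4/3 \<le> c^2"
    by (simp add: c_star_def power_divide)
  have "115/100 \<le> c_star"
    using sqrt_3_bounds by (simp add: c_star_def field_simps)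
  then show "115/100 \<le> c"
    using c by linarith
  show "c \<le> 11657/10000"
    using c c_bar_le by linarith
  have "1 = \<sigma> c_star"
    by (simp add: c_star_def)
  also have "\<dots> \<le> \<sigma> c"
    using c by (intro mult_left_mono) auto
  finally show "1 \<le> \<sigma> c" .
  have "\<sigma> c \<le> 17321/10000 / 2 * (11657/10000)"
    using sqrt_3_bounds \<open>c \<le> 11657/10000\<close> \<open>115/100 \<le> c\<close>
    by (intro mult_mono divide_right_mono) auto
  then show "\<sigma> c \<le> 10096/10000"
    by linarith
  have "sqrt 3 < 2"
    by (simp add: real_sqrt_less_iff[of 3 4, simplified])
  then show "\<sigma> c < c"
    using \<open>115/100 \<le> c\<close> by simp
qed

lemma abs_K_deriv_le:
  assumes "9/10 \<le> z" "z \<le> 1105/1000" "K z \<le> 10096/10000"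
  shows "\<bar>K z * (z^2 - 1) / z\<bar> \<le> 1/4"
proof -
  have "(9/10)^2 \<le> z^2" "z^2 \<le> (1105/1000)^2"
    using assms by (intro power_mono; simp)+
  then have "\<bar>z^2 - 1\<bar> \<le> 221025/1000000"
    unfolding abs_le_iff by (auto simp: power2_eq_square)
  moreover have "0 < z"
    using assms by simp
  ultimately have "\<bar>K z * (z^2 - 1) / z\<bar> = K z * \<bar>z^2 - 1\<bar> / z"
    by (simp add: abs_mult K_pos less_imp_le)
  also have "\<dots> \<le> (10096/10000) * (221025/1000000) / (9/10)"
    using assms K_pos[of z] \<open>\<bar>z^2 - 1\<bar> \<le> 221025/1000000\<close> by (intro frac_le mult_mono) auto
  also have "\<dots> \<le> 1/4"
    by simp
  finally show ?thesis .
qed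

lemma K_diff_le:
  assumes "9/10 \<le> a" "a \<le> b" "b \<le> 1105/1000" "K a \<le> 10096/10000" "K b \<le> 10096/10000"
  shows "\<bar>K b - K a\<bar> \<le> (b - a) / 4"
proof (cases "a = b")
  case False
  then obtain z where z: "a < z" "z < b" "K b - K a = (b - a) * (K z * (z^2 - 1) / z)"
    using MVT2[of a b K "\<lambda>z. K z * (z^2 - 1) / z"] DERIV_K assms by force
  have "K z \<le> 10096/10000"
    using K_strict_decreasing[of a z] K_strict_increasing[of z b] z assms
    by (cases "z \<le> 1") auto
  then have "\<bar>K z * (z^2 - 1) / z\<bar> \<le> 1/4"
    using z assms by (intro abs_K_deriv_le) auto
  have "\<bar>K b - K a\<bar> = \<bar>b - a\<bar> * \<bar>K z * (z^2 - 1) / z\<bar>"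
    by (simp only: z(3) abs_mult)
  also have "\<dots> \<le> \<bar>b - a\<bar> * (1/4)"
    by (rule mult_left_mono) (use \<open>\<bar>K z * (z^2 - 1) / z\<bar> \<le> 1/4\<close> in simp_all)
  finally show ?thesis
    using z by simp
qed simp

lemma R_plus_diff_ge:
  assumes "1 \<le> s" "s \<le> s'" "s' \<le> 10096/10000"
  shows "4 * (s' - s) \<le> R_plus s' - R_plus s"
proof -
  have "R_plus s' \<le> 1105/1000"
    using assms K_numeral_bounds by (intro R_plus_le) auto
  then have "\<bar>K (R_plus s') - K (R_plus s)\<bar> \<le> (R_plus s' - R_plus s) / 4"
    using assms R_plus_spec[of s] R_plus_spec[of s'] R_plus_mono[of s s']
    by (intro K_diff_le) auto
  then show ?thesis
    using assms R_plus_spec[of s] R_plus_spec[of s'] by simp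
qed

lemma R_minus_diff_ge:
  assumes "1 \<le> s" "s \<le> s'" "s' \<le> 10096/10000"
  shows "4 * (s' - s) \<le> R_minus s - R_minus s'"
proof -
  have "9/10 \<le> R_minus s'"
    using assms K_numeral_bounds by (intro R_minus_ge) auto
  then have "\<bar>K (R_minus s) - K (R_minus s')\<bar> \<le> (R_minus s - R_minus s') / 4"
    using assms R_minus_spec[of s] R_minus_spec[of s'] R_minus_antimono[of s s']
    by (intro K_diff_le) auto
  then show ?thesis
    using assms R_minus_spec[of s] R_minus_spec[of s'] by simp
qed

section \<open>Monotonicity of h2\<close>

definition h2_integrand :: "real \<Rightarrow> real \<Rightarrow> real" where
  "h2_integrand c R = K R / (R * sqrt (c^2 - (K R)^2))"

definition h2_left :: "real \<Rightarrow> real" where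
  "h2_left c = integral {R_minus (\<sigma> c)..1} (h2_integrand c)"

definition h2_right :: "real \<Rightarrow> real" where
  "h2_right c = integral {1..R_plus (\<sigma> c)} (h2_integrand c)"

lemma h2_integrand_ge:
  assumes "1 \<le> s" "s < c" "R_minus s \<le> R" "R \<le> R_plus s"
  shows "1 / (R * c) \<le> h2_integrand c R"
proof -
  have "0 < R"
    using assms R_minus_spec(1)[of s] by linarith
  then have "1 \<le> K R" "K R < c"
    using K_ge_1 K_le_between_roots[of s R] assms by fastforce+
  then have "0 < c" "(K R)^2 < c^2"
    using assms by (auto intro: power_strict_mono)
  then have "0 < sqrt (c^2 - (K R)^2)" "sqrt (c^2 - (K R)^2) \<le> c"
    by (auto intro: real_le_lsqrt)
  then have "1 / (R * c) \<le> 1 / (R * sqrt (c^2 - (K R)^2))"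
    using \<open>0 < R\<close> \<open>0 < c\<close> by (intro divide_left_mono mult_left_mono mult_pos_pos) auto
  also have "\<dots> \<le> K R / (R * sqrt (c^2 - (K R)^2))"
    using \<open>0 < sqrt (c^2 - (K R)^2)\<close> \<open>0 < R\<close> \<open>1 \<le> K R\<close> by (intro divide_right_mono) auto
  finally show ?thesis
    by (simp add: h2_integrand_def)
qed

lemma h2_integrand_nonneg:
  assumes "0 < R" "K R \<le> c"
  shows "0 \<le> h2_integrand c R"
proof -
  have "(K R)^2 \<le> c^2"
    using assms K_pos[of R] by (intro power_mono) auto
  then show ?thesis
    using assms K_pos[of R] by (simp add: h2_integrand_def)
qed

lemma continuous_on_h2_integrand:
  assumes "1 \<le> s" "s < c"
  shows "continuous_on {R_minus s..R_plus s} (h2_integrand c)"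
proof (intro continuous_at_imp_continuous_on ballI)
  fix R assume R: "R \<in> {R_minus s..R_plus s}"
  then have "0 < R"
    using R_minus_spec(1)[OF assms(1)] by auto
  moreover have "K R \<le> s"
    using R assms by (intro K_le_between_roots) auto
  then have "(K R)^2 < c^2"
    using K_ge_1[OF \<open>0 < R\<close>] assms by (intro power_strict_mono) auto
  ultimately show "isCont (h2_integrand c) R"
    unfolding h2_integrand_def[abs_def] by (intro continuous_intros isCont_K) auto
qed

lemma h2_integrand_integrable:
  assumes "1 \<le> s" "s < c" "R_minus s \<le> a" "b \<le> R_plus s"
  shows "h2_integrand c integrable_on {a..b}"
  using assms
  by (intro integrable_continuous_interval continuous_on_subset[OF continuous_on_h2_integrand]) auto

lemma h2_eq_left_add_right:
  assumes "c \<in> {c_star..c_bar}"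
  shows "h2 c = h2_left c + h2_right c"
proof -
  note c = I_A_bounds[OF assms]
  have "R_minus (\<sigma> c) \<le> 1" "1 \<le> R_plus (\<sigma> c)"
    using R_minus_spec R_plus_spec c by auto
  then have "h2_left c + h2_right c = integral {R_minus (\<sigma> c)..R_plus (\<sigma> c)} (h2_integrand c)"
    unfolding h2_left_def h2_right_def
    by (intro Henstock_Kurzweil_Integration.integral_combine h2_integrand_integrable[of "\<sigma> c"])
      (use c in auto)
  then show ?thesis
    by (simp add: h2_def h2_integrand_def[abs_def])
qed

lemma inverse_sqrt_diff_le:
  fixes m A B :: real
  assumes "0 < m" "m^2 \<le> A" "A \<le> B"
  shows "1 / sqrt A - 1 / sqrt B \<le> (B - A) / (2 * m^3)"
proof -
  define a b where "a = sqrt A" and "b = sqrt B"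
  have "0 \<le> A" "0 \<le> B"
    using assms zero_le_power2[of m] by linarith+
  have "m \<le> a" "a \<le> b"
    using assms by (auto simp: a_def b_def real_le_rsqrt)
  have "(b^2 - a^2) / (2 * a^3) - (1/a - 1/b) = (b - a)^2 * (b + 2 * a) / (2 * a^3 * b)"
    using \<open>m \<le> a\<close> \<open>a \<le> b\<close> assms by (simp add: field_simps power2_eq_square power3_eq_cube)
  also have "\<dots> \<ge> 0"
    using \<open>m \<le> a\<close> \<open>a \<le> b\<close> assms by simp
  finally have "1/a - 1/b \<le> (b^2 - a^2) / (2 * a^3)"
    by simp
  also have "b^2 - a^2 = B - A"
    using \<open>0 \<le> A\<close> \<open>0 \<le> B\<close> by (simp add: a_def b_def)
  also have "(B - A) / (2 * a^3) \<le> (B - A) / (2 * m^3)"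
    using \<open>m \<le> a\<close> assms by (intro divide_left_mono power_mono mult_left_mono) auto
  finally show ?thesis
    by (simp add: a_def b_def)
qed

lemma h2_integrand_diff_le:
  assumes "c \<in> {c_star..c_bar}" "c' \<in> {c_star..c_bar}" "c \<le> c'" "0 < R" "K R \<le> \<sigma> c"
  shows "h2_integrand c R \<le> h2_integrand c' R + 61/10 * (K R / R) * (c' - c)"
proof -
  note bounds = I_A_bounds[OF assms(1)] I_A_bounds[OF assms(2)]
  define A B where "A = c^2 - (K R)^2" and "B = c'^2 - (K R)^2"
  have "(K R)^2 \<le> (\<sigma> c)^2"
    using assms K_pos[of R] by (intro power_mono) auto
  then have "(577/1000)^2 \<le> A"
    using bounds by (simp add: A_def power_mult_distrib power_divide)
  moreover have "c^2 \<le> c'^2"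
    using assms bounds by (intro power_mono) auto
  then have "A \<le> B"
    by (simp add: A_def B_def)
  ultimately have "1 / sqrt A - 1 / sqrt B \<le> (B - A) / (2 * (577/1000)^3)"
    by (intro inverse_sqrt_diff_le) auto
  also have "B - A = (c' - c) * (c' + c)"
    by (simp add: A_def B_def power2_eq_square algebra_simps)
  also have "(c' - c) * (c' + c) / (2 * (577/1000)^3)
      \<le> (c' - c) * (2 * (11657/10000)) / (2 * (577/1000)^3)"
    using assms bounds by (intro divide_right_mono mult_left_mono) auto
  also have "\<dots> \<le> 61/10 * (c' - c)"
    using assms by (simp add: field_simps)
  finally have "1 / sqrt A - 1 / sqrt B \<le> 61/10 * (c' - c)" .
  then have "K R / R * (1 / sqrt A - 1 / sqrt B) \<le> K R / R * (61/10 * (c' - c))"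
    using assms K_pos[of R] by (intro mult_left_mono) auto
  then show ?thesis
    by (simp add: h2_integrand_def A_def B_def right_diff_distrib)
qed

lemma integral_interval_ge_const:
  fixes f :: "real \<Rightarrow> real"
  assumes "a \<le> b" "f integrable_on {a..b}" "\<And>x. x \<in> {a..b} \<Longrightarrow> m \<le> f x"
  shows "(b - a) * m \<le> integral {a..b} f"
proof -
  have "integral {a..b} (\<lambda>_. m) \<le> integral {a..b} f"
    using assms by (intro integral_le integrable_const_ivl) auto
  with assms show ?thesis
    by simp
qed

lemma integral_interval_le_add_const:
  fixes f g :: "real \<Rightarrow> real"
  assumes "a \<le> b" "f integrable_on {a..b}" "g integrable_on {a..b}"
    "\<And>x. x \<in> {a..b} \<Longrightarrow> f x \<le> g x + C"
  shows "integral {a..b} f \<le> integral {a..b} g + (b - a) * C"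
proof -
  have "integral {a..b} f \<le> integral {a..b} (\<lambda>x. g x + C)"
    using assms by (intro integral_le integrable_add integrable_const_ivl) auto
  also have "\<dots> = integral {a..b} g + (b - a) * C"
    using assms by (simp add: integral_add[OF assms(3) integrable_const_ivl])
  finally show ?thesis .
qed

lemma \<sigma>_diff_ge: "c \<le> c' \<Longrightarrow> 866/1000 * (c' - c) \<le> \<sigma> c' - \<sigma> c"
  using mult_right_mono[OF sqrt_3_bounds(1), of "(c' - c) / 2"] by (simp add: algebra_simps)

lemma R_plus_\<sigma>_growth:
  assumes "c \<in> {c_star..c_bar}" "c' \<in> {c_star..c_bar}" "c \<le> c'"
  shows "1 \<le> R_plus (\<sigma> c)" "R_plus (\<sigma> c) \<le> R_plus (\<sigma> c')" "R_plus (\<sigma> c') \<le> 1105/1000"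
    and "4 * (866/1000) * (c' - c) \<le> R_plus (\<sigma> c') - R_plus (\<sigma> c)"
proof -
  note bounds = I_A_bounds[OF assms(1)] I_A_bounds[OF assms(2)]
  have "\<sigma> c \<le> \<sigma> c'"
    using assms(3) by (intro mult_left_mono) auto
  then show "1 \<le> R_plus (\<sigma> c)" "R_plus (\<sigma> c) \<le> R_plus (\<sigma> c')"
    using bounds by (auto intro: R_plus_spec R_plus_mono)
  show "R_plus (\<sigma> c') \<le> 1105/1000"
    by (rule R_plus_le) (use bounds K_numeral_bounds(4) in auto)
  have "4 * (\<sigma> c' - \<sigma> c) \<le> R_plus (\<sigma> c') - R_plus (\<sigma> c)"
    by (rule R_plus_diff_ge) (use bounds \<open>\<sigma> c \<le> \<sigma> c'\<close> in auto)
  then show "4 * (866/1000) * (c' - c) \<le> R_plus (\<sigma> c') - R_plus (\<sigma> c)"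
    using \<sigma>_diff_ge[OF assms(3)] by argo
qed

lemma R_minus_\<sigma>_growth:
  assumes "c \<in> {c_star..c_bar}" "c' \<in> {c_star..c_bar}" "c \<le> c'"
  shows "9/10 \<le> R_minus (\<sigma> c')" "R_minus (\<sigma> c') \<le> R_minus (\<sigma> c)" "R_minus (\<sigma> c) \<le> 1"
    and "4 * (866/1000) * (c' - c) \<le> R_minus (\<sigma> c) - R_minus (\<sigma> c')"
proof -
  note bounds = I_A_bounds[OF assms(1)] I_A_bounds[OF assms(2)]
  have "\<sigma> c \<le> \<sigma> c'"
    using assms(3) by (intro mult_left_mono) auto
  then show "R_minus (\<sigma> c') \<le> R_minus (\<sigma> c)" "R_minus (\<sigma> c) \<le> 1"
    using bounds by (auto intro: R_minus_spec R_minus_antimono)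
  show "9/10 \<le> R_minus (\<sigma> c')"
    by (rule R_minus_ge) (use bounds K_numeral_bounds(3) in auto)
  have "4 * (\<sigma> c' - \<sigma> c) \<le> R_minus (\<sigma> c) - R_minus (\<sigma> c')"
    by (rule R_minus_diff_ge) (use bounds \<open>\<sigma> c \<le> \<sigma> c'\<close> in auto)
  then show "4 * (866/1000) * (c' - c) \<le> R_minus (\<sigma> c) - R_minus (\<sigma> c')"
    using \<sigma>_diff_ge[OF assms(3)] by argo
qed

lemma h2_right_growth:
  assumes "c \<in> {c_star..c_bar}" "c' \<in> {c_star..c_bar}" "c \<le> c'"
  shows "h2_right c + 2 * (c' - c) \<le> h2_right c'"
proof -
  note bounds = I_A_bounds[OF assms(1)] I_A_bounds[OF assms(2)]
  define r r' where "r = R_plus (\<sigma> c)" and "r' = R_plus (\<sigma> c')"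
  note r = R_plus_\<sigma>_growth[OF assms, folded r_def r'_def]
  have integrable: "h2_integrand c' integrable_on {a..b}" if "1 \<le> a" "b \<le> r'" for a b
    by (rule h2_integrand_integrable[of "\<sigma> c'"])
      (use that bounds R_minus_spec[of "\<sigma> c'"] in \<open>auto simp: r'_def\<close>)
  have integrable_c: "h2_integrand c integrable_on {1..r}"
    by (rule h2_integrand_integrable[of "\<sigma> c"])
      (use bounds R_minus_spec[of "\<sigma> c"] in \<open>auto simp: r_def\<close>)
  have "h2_right c' = integral {1..r} (h2_integrand c') + integral {r..r'} (h2_integrand c')"
    unfolding h2_right_def r'_def[symmetric] using r integrable
    by (intro Henstock_Kurzweil_Integration.integral_combine[symmetric] integrable_combine) auto
  moreover have "(r' - r) * (7763/10000) \<le> integral {r..r'} (h2_integrand c')"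
  proof (rule integral_interval_ge_const)
    fix R assume R: "R \<in> {r..r'}"
    then have "1 / (R * c') \<le> h2_integrand c' R"
      using bounds R_minus_spec[of "\<sigma> c'"] r by (intro h2_integrand_ge[of "\<sigma> c'"]) (auto simp: r'_def)
    moreover have "1 / ((1105/1000) * (11657/10000)) \<le> 1 / (R * c')"
      using R r bounds by (intro divide_left_mono mult_mono mult_pos_pos) auto
    ultimately show "7763/10000 \<le> h2_integrand c' R"
      by simp
  qed (use r integrable in auto)
  moreover have "integral {1..r} (h2_integrand c)
      \<le> integral {1..r} (h2_integrand c') + (r - 1) * (61/10 * (10096/10000) * (c' - c))"
  proof (rule integral_interval_le_add_const)
    fix R assume R: "R \<in> {1..r}"
    then have "0 < R"
      by simp
    from R have "K R \<le> \<sigma> c"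
      using bounds R_minus_spec[of "\<sigma> c"] by (intro K_le_between_roots) (auto simp: r_def)
    moreover have "K R / R \<le> K R"
      using R K_pos[of R] by (simp add: divide_le_eq mult_le_cancel_left1)
    ultimately have "61/10 * (K R / R) * (c' - c) \<le> 61/10 * (10096/10000) * (c' - c)"
      using assms bounds by (intro mult_right_mono) auto
    then show "h2_integrand c R \<le> h2_integrand c' R + 61/10 * (10096/10000) * (c' - c)"
      using h2_integrand_diff_le[OF assms \<open>0 < R\<close> \<open>K R \<le> \<sigma> c\<close>] by linarith
  qed (use r integrable integrable_c in auto)
  moreover have "(r - 1) * (61/10 * (10096/10000) * (c' - c)) \<le> 105/1000 * (61/10 * (10096/10000) * (c' - c))"
    using r assms by (intro mult_right_mono) auto
  ultimately show ?thesis
    using assms(3) r unfolding h2_right_def r_def[symmetric] r'_def[symmetric] by argo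
qed

lemma h2_left_mono:
  assumes "c \<in> {c_star..c_bar}" "c' \<in> {c_star..c_bar}" "c \<le> c'"
  shows "h2_left c \<le> h2_left c'"
proof -
  note bounds = I_A_bounds[OF assms(1)] I_A_bounds[OF assms(2)]
  define l l' where "l = R_minus (\<sigma> c)" and "l' = R_minus (\<sigma> c')"
  note l = R_minus_\<sigma>_growth[OF assms, folded l_def l'_def]
  have integrable: "h2_integrand c' integrable_on {a..b}" if "l' \<le> a" "b \<le> 1" for a b
    by (rule h2_integrand_integrable[of "\<sigma> c'"])
      (use that bounds R_plus_spec[of "\<sigma> c'"] in \<open>auto simp: l'_def\<close>)
  have integrable_c: "h2_integrand c integrable_on {l..1}"
    by (rule h2_integrand_integrable[of "\<sigma> c"])
      (use bounds R_plus_spec[of "\<sigma> c"] in \<open>auto simp: l_def\<close>)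
  have "h2_left c' = integral {l'..l} (h2_integrand c') + integral {l..1} (h2_integrand c')"
    unfolding h2_left_def l'_def[symmetric] using l integrable
    by (intro Henstock_Kurzweil_Integration.integral_combine[symmetric] integrable_combine) auto
  moreover have "(l - l') * (85/100) \<le> integral {l'..l} (h2_integrand c')"
  proof (rule integral_interval_ge_const)
    fix R assume R: "R \<in> {l'..l}"
    then have "1 / (R * c') \<le> h2_integrand c' R"
      using bounds R_plus_spec[of "\<sigma> c'"] l by (intro h2_integrand_ge[of "\<sigma> c'"]) (auto simp: l'_def)
    moreover have "1 / (1 * (11657/10000)) \<le> 1 / (R * c')"
      using R l bounds by (intro divide_left_mono mult_mono mult_pos_pos) auto
    ultimately show "85/100 \<le> h2_integrand c' R"
      by simp
  qed (use l integrable in auto)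
  moreover have "integral {l..1} (h2_integrand c)
      \<le> integral {l..1} (h2_integrand c') + (1 - l) * (61/10 * (113/100) * (c' - c))"
  proof (rule integral_interval_le_add_const)
    fix R assume R: "R \<in> {l..1}"
    then have "0 < R"
      using l by simp
    from R have "K R \<le> \<sigma> c"
      using bounds R_plus_spec[of "\<sigma> c"] by (intro K_le_between_roots) (auto simp: l_def)
    moreover have "K R / R \<le> K R / (9/10)"
      using R l K_pos[of R] by (intro divide_left_mono) auto
    ultimately have "K R / R \<le> 113/100"
      using bounds by simp
    then have "61/10 * (K R / R) * (c' - c) \<le> 61/10 * (113/100) * (c' - c)"
      using assms by (intro mult_right_mono) auto
    then show "h2_integrand c R \<le> h2_integrand c' R + 61/10 * (113/100) * (c' - c)"
      using h2_integrand_diff_le[OF assms \<open>0 < R\<close> \<open>K R \<le> \<sigma> c\<close>] by linarith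
  qed (use l integrable integrable_c in auto)
  moreover have "(1 - l) * (61/10 * (113/100) * (c' - c)) \<le> 1/10 * (61/10 * (113/100) * (c' - c))"
    using l assms by (intro mult_right_mono) auto
  ultimately show ?thesis
    using assms(3) l unfolding h2_left_def l_def[symmetric] l'_def[symmetric] by argo
qed

lemma h2_mono: "mono_on {c_star..c_bar} h2"
proof (rule mono_onI)
  fix c c' assume c: "c \<in> {c_star..c_bar}" "c' \<in> {c_star..c_bar}" "c \<le> c'"
  then have "h2 c = h2_left c + h2_right c" "h2 c' = h2_left c' + h2_right c'"
    by (simp_all add: h2_eq_left_add_right)
  moreover have "h2_left c \<le> h2_left c'" "h2_right c + 2 * (c' - c) \<le> h2_right c'"
    using h2_left_mono[OF c] h2_right_growth[OF c] .
  ultimately show "h2 c \<le> h2 c'"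
    using c(3) by argo
qed

section \<open>The function rho\<close>

(* R_minus clamped at s = 1: defined and antitone on all reals, hence Borel measurable, as the
   nonnegative integrals below require. *)
definition R_minus_ext :: "real \<Rightarrow> real" where
  "R_minus_ext s = R_minus (max 1 s)"

lemma R_minus_ext_eq [simp]: "1 \<le> s \<Longrightarrow> R_minus_ext s = R_minus s"
  by (simp add: R_minus_ext_def max_def)

lemma R_minus_ext_bounds: "0 < R_minus_ext s" "R_minus_ext s \<le> 1"
  using R_minus_spec[of "max 1 s"] by (auto simp: R_minus_ext_def)

lemma R_minus_ext_antimono: "s \<le> s' \<Longrightarrow> R_minus_ext s' \<le> R_minus_ext s"
  unfolding R_minus_ext_def by (rule R_minus_antimono) auto

lemma borel_measurable_R_minus_ext [measurable]: "R_minus_ext \<in> borel_measurable borel"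
proof -
  have "mono (\<lambda>s. - R_minus_ext s)"
    by (intro monoI) (simp add: R_minus_ext_antimono)
  then have "(\<lambda>s. - (- R_minus_ext s)) \<in> borel_measurable borel"
    by (intro borel_measurable_uminus borel_measurable_mono)
  then show ?thesis
    by simp
qed

lemma K_minus_1_le:
  assumes "6/10 \<le> R" "R \<le> 1"
  shows "4 * R^2 * (K R - 1) \<le> K R * (1 - R^2)^2"
proof -
  define E where "E = exp ((R^2 - 1) / 2)"
  have "0 < R" "R^2 \<le> 1" "(6/10)^2 \<le> R^2"
    using assms by (auto intro: power_le_one power_mono)
  then have E: "E \<le> 1 + (R^2 - 1) / 2 + ((R^2 - 1) / 2)^2 / 2"
    unfolding E_def by (intro exp_le_Taylor_quadratic) simp
  have "(1 - R^2) * (1 - R^2) \<le> (1 - R^2) * 1"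
    using \<open>R^2 \<le> 1\<close> by (intro mult_left_mono) auto
  then have "(1 - R^2)^2 \<le> 1 - R^2"
    by (simp add: power2_eq_square)
  then have "0 \<le> 4 * R^2 - (1 - R^2)^2"
    using \<open>(6/10)^2 \<le> R^2\<close> by (simp add: power_divide)
  with E have "E * (4 * R^2 - (1 - R^2)^2)
      \<le> (1 + (R^2 - 1) / 2 + ((R^2 - 1) / 2)^2 / 2) * (4 * R^2 - (1 - R^2)^2)"
    by (rule mult_right_mono)
  also have "\<dots> = 4 * R^3 - (1 - R)^3 * (5 + 15*R + 2*R^2 - 2*R^3 - 3*R^4 - R^5) / 8"
    by (simp add: field_simps power2_eq_square power3_eq_cube power4_eq_xxxx numeral_eq_Suc)
  also have "\<dots> \<le> 4 * R^3"
  proof -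
    have "R^3 \<le> 1" "R^4 \<le> 1" "R^5 \<le> 1"
      using assms by (auto intro: power_le_one)
    then have "0 \<le> 5 + 15*R + 2*R^2 - 2*R^3 - 3*R^4 - R^5"
      using assms zero_le_power2[of R] by linarith
    then show ?thesis
      using assms by simp
  qed
  finally have "E * (4 * R^2 - (1 - R^2)^2) \<le> 4 * R^3" .
  have "K R = E / R"
    by (simp add: K_def E_def)
  then have "R * (4 * R^2 * (K R - 1)) = 4 * R^2 * E - 4 * R^3"
    using \<open>0 < R\<close> by (simp add: field_simps power2_eq_square power3_eq_cube)
  also have "\<dots> \<le> E * (1 - R^2)^2"
    using \<open>E * (4 * R^2 - (1 - R^2)^2) \<le> 4 * R^3\<close> by (simp add: algebra_simps)
  also have "\<dots> = R * (K R * (1 - R^2)^2)"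
    using \<open>0 < R\<close> \<open>K R = E / R\<close> by simp
  finally show ?thesis
    using \<open>0 < R\<close> by simp
qed

definition Q :: "real \<Rightarrow> real" where
  "Q R = (K R - 1) / (1 - R^2)^2"

lemma DERIV_Q:
  assumes "0 < R" "R < 1"
  shows "(Q has_real_derivative (4 * R^2 * (K R - 1) - K R * (1 - R^2)^2) / (R * (1 - R^2)^3)) (at R)"
proof -
  define u where "u = 1 - R^2"
  have "R^2 < 1"
    using assms by (simp add: abs_square_less_1)
  then have "u \<noteq> 0"
    by (simp add: u_def)
  have "((\<lambda>R. K R - 1) has_real_derivative K R * (R^2 - 1) / R) (at R)"
    using DERIV_K[OF assms(1)] by (auto intro!: derivative_eq_intros)
  moreover have "((\<lambda>R. (1 - R^2)^2) has_real_derivative 2 * (1 - R^2) * (- 2 * R)) (at R)"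
    by (auto intro!: derivative_eq_intros simp: power2_eq_square)
  ultimately have "(Q has_real_derivative
      (K R * (R^2 - 1) / R * u^2 - (K R - 1) * (2 * u * (- 2 * R))) / (u^2 * u^2)) (at R)"
    unfolding Q_def[abs_def] u_def using \<open>u \<noteq> 0\<close> by (intro DERIV_divide) (auto simp: u_def)
  moreover have "R^2 - 1 = - u"
    by (simp add: u_def)
  then have "K R * (R^2 - 1) / R * u^2 - (K R - 1) * (2 * u * (- 2 * R))
      = u * (4 * R^2 * (K R - 1) - K R * u^2) / R"
    using assms by (simp only:) (simp add: field_simps power2_eq_square)
  ultimately show ?thesis
    unfolding u_def[symmetric] using assms \<open>u \<noteq> 0\<close> by (simp add: power2_eq_square power3_eq_cube mult.assoc)
qed

lemma Q_antimono:
  assumes "6/10 \<le> a" "a \<le> b" "b < 1"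
  shows "Q b \<le> Q a"
proof -
  have deriv: "(Q has_real_derivative (4 * x^2 * (K x - 1) - K x * (1 - x^2)^2) / (x * (1 - x^2)^3)) (at x)"
    if "a \<le> x" "x \<le> b" for x
    using that assms by (intro DERIV_Q) auto
  show ?thesis
  proof (rule DERIV_nonpos_imp_nonincreasing[OF assms(2)])
    fix x assume x: "a \<le> x" "x \<le> b"
    then have "x^2 < 1"
      using assms by (simp add: abs_square_less_1)
    moreover have "4 * x^2 * (K x - 1) \<le> K x * (1 - x^2)^2"
      using x assms by (intro K_minus_1_le) auto
    ultimately have "(4 * x^2 * (K x - 1) - K x * (1 - x^2)^2) / (x * (1 - x^2)^3) \<le> 0"
      using x assms by (intro divide_nonpos_nonneg) auto
    with deriv[OF x] show "\<exists>y. (Q has_real_derivative y) (at x) \<and> y \<le> 0"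
      by blast
  qed
qed

definition rho :: "real \<Rightarrow> real" where
  "rho x = sqrt x / (1 - (R_minus_ext (1 + x))^2)"

lemma rho_0 [simp]: "rho 0 = 0"
  by (simp add: rho_def)

lemma rho_nonneg: "0 \<le> x \<Longrightarrow> 0 \<le> rho x"
  using R_minus_ext_bounds[of "1 + x"] by (simp add: rho_def power_le_one)

lemma rho_eq_sqrt_Q:
  assumes "0 < x"
  shows "rho x = sqrt (Q (R_minus (1 + x)))"
proof -
  define R where "R = R_minus (1 + x)"
  have "0 < R" "R < 1" "K R = 1 + x"
    using assms R_minus_spec[of "1 + x"] R_minus_less_1[of "1 + x"] by (auto simp: R_def)
  then have "0 \<le> 1 - R^2"
    by (simp add: power_le_one)
  with \<open>K R = 1 + x\<close> assms show ?thesis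
    by (simp add: rho_def Q_def real_sqrt_divide R_def[symmetric])
qed

lemma R_minus_range:
  assumes "0 < x" "x \<le> 1657/10000"
  shows "6/10 \<le> R_minus (1 + x)" "R_minus (1 + x) < 1"
proof -
  show "6/10 \<le> R_minus (1 + x)"
    by (rule R_minus_ge) (use assms K_numeral_bounds(1) in auto)
  show "R_minus (1 + x) < 1"
    using assms by (intro R_minus_less_1) auto
qed

lemma rho_mono:
  assumes "0 \<le> x" "x \<le> x'" "x' \<le> 1657/10000"
  shows "rho x \<le> rho x'"
proof (cases "x = 0")
  case False
  then have "Q (R_minus (1 + x)) \<le> Q (R_minus (1 + x'))"
    using assms R_minus_range[of x] R_minus_range[of x'] R_minus_antimono[of "1 + x" "1 + x'"]
    by (intro Q_antimono) auto
  then show ?thesis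
    using assms False by (simp add: rho_eq_sqrt_Q)
qed (use assms rho_nonneg in auto)

lemma rho_le:
  assumes "0 \<le> x" "x \<le> 1657/10000"
  shows "rho x \<le> 74/100"
proof (cases "x = 0")
  case False
  then have "Q (R_minus (1 + x)) \<le> Q (6/10)"
    using assms R_minus_range[of x] by (intro Q_antimono) auto
  also have "\<dots> \<le> (74/100)^2"
    using K_numeral_bounds(2) by (simp add: Q_def power2_eq_square)
  finally have "sqrt (Q (R_minus (1 + x))) \<le> 74/100"
    by (intro real_le_lsqrt) auto
  then show ?thesis
    using assms False by (simp add: rho_eq_sqrt_Q)
qed simp

section \<open>Monotonicity of h1 + 2 h2\<close>

(* The integrand of h1/2 + h2_left after substituting s = c sin psi, resp. s = K R, and then
   t = (s - 1)/(c - 1); see phi_rescaled. *)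
definition phi :: "real \<Rightarrow> real \<Rightarrow> real" where
  "phi c t = rho ((c - 1) * t) / sqrt (t * (1 - t) * (c + 1 + (c - 1) * t))"

lemma phi_nonneg: "0 \<le> t \<Longrightarrow> t \<le> 1 \<Longrightarrow> 1 \<le> c \<Longrightarrow> 0 \<le> phi c t"
  unfolding phi_def by (intro divide_nonneg_nonneg rho_nonneg) auto

lemma phi_outside_open_unit_interval: "t \<notin> {0<..<1} \<Longrightarrow> indicator {0..1} t * phi c t = 0"
  by (cases "t = 0"; cases "t = 1") (auto simp: indicator_def phi_def)

lemma inverse_sqrt_mult_le:
  assumes "0 < t" "t < 1"
  shows "1 / sqrt (t * (1 - t)) \<le> 1 / sqrt t + 1 / sqrt (1 - t)"
proof -
  define \<alpha> \<beta> where "\<alpha> = sqrt t" and "\<beta> = sqrt (1 - t)"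
  have "0 < \<alpha>" "\<alpha> \<le> 1" "0 < \<beta>" "\<beta> \<le> 1" "\<alpha>^2 + \<beta>^2 = 1"
    using assms by (auto simp: \<alpha>_def \<beta>_def)
  then have "\<alpha>^2 \<le> \<alpha>" "\<beta>^2 \<le> \<beta>"
    by (auto simp: power2_eq_square intro: mult_left_le_one_le)
  then have "1 / (\<alpha> * \<beta>) \<le> (\<alpha> + \<beta>) / (\<alpha> * \<beta>)"
    using \<open>\<alpha>^2 + \<beta>^2 = 1\<close> \<open>0 < \<alpha>\<close> \<open>0 < \<beta>\<close> by (intro divide_right_mono) auto
  also have "\<dots> = 1 / \<alpha> + 1 / \<beta>"
    using \<open>0 < \<alpha>\<close> \<open>0 < \<beta>\<close> by (simp add: field_simps)
  finally show ?thesis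
    by (simp add: \<alpha>_def \<beta>_def real_sqrt_mult)
qed

lemma rho_argument_bounds:
  assumes "c \<in> {c_star..c_bar}" "0 \<le> t" "t \<le> 1"
  shows "0 \<le> (c - 1) * t" "(c - 1) * t \<le> 1657/10000"
proof -
  note bounds = I_A_bounds[OF assms(1)]
  show "0 \<le> (c - 1) * t"
    using bounds assms by simp
  have "(c - 1) * t \<le> c - 1"
    using bounds assms by (intro mult_left_le) auto
  then show "(c - 1) * t \<le> 1657/10000"
    using bounds by linarith
qed

lemma phi_le:
  assumes "c \<in> {c_star..c_bar}" "0 < t" "t < 1"
  shows "phi c t \<le> 1 / sqrt t + 1 / sqrt (1 - t)"
proof -
  define x A where "x = (c - 1) * t" and "A = c + 1 + x"
  have "rho x \<le> 1"
    using rho_argument_bounds[OF assms(1), of t] assms rho_le by (force simp: x_def)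
  moreover have "1 \<le> sqrt A"
    using I_A_bounds[OF assms(1)] assms rho_argument_bounds[OF assms(1), of t] by (simp add: A_def x_def)
  ultimately have "rho x / sqrt A \<le> 1"
    by (subst divide_le_eq_1_pos) linarith+
  moreover have "phi c t = rho x / sqrt A * (1 / sqrt (t * (1 - t)))"
    by (simp add: phi_def x_def A_def real_sqrt_mult)
  ultimately have "phi c t \<le> 1 * (1 / sqrt (t * (1 - t)))"
    using assms by (simp only:) (intro mult_right_mono; simp)
  also have "\<dots> \<le> 1 / sqrt t + 1 / sqrt (1 - t)"
    using assms by (simp add: inverse_sqrt_mult_le)
  finally show ?thesis .
qed

lemma phi_denominator_diff_le:
  assumes "c \<in> {c_star..c_bar}" "c' \<in> {c_star..c_bar}" "c \<le> c'" "0 \<le> t" "t \<le> 1"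
  shows "1 / sqrt (c + 1 + (c - 1) * t) - 1 / sqrt (c' + 1 + (c' - 1) * t) \<le> 3175/10000 * (c' - c)"
proof -
  define A A' where "A = c + 1 + (c - 1) * t" and "A' = c' + 1 + (c' - 1) * t"
  have "(c' - c) * t \<le> c' - c" "c * t \<le> c' * t"
    using assms by (auto intro: mult_left_le mult_right_mono)
  then have "(1466/1000)^2 \<le> A" "A \<le> A'" "A' - A \<le> 2 * (c' - c)"
    using I_A_bounds[OF assms(1)] rho_argument_bounds[OF assms(1,4,5)] assms
    by (auto simp: A_def A'_def power2_eq_square algebra_simps)
  then have "1 / sqrt A - 1 / sqrt A' \<le> (A' - A) / (2 * (1466/1000)^3)"
    by (intro inverse_sqrt_diff_le) auto
  also have "\<dots> \<le> 2 * (c' - c) / (2 * (1466/1000)^3)"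
    using \<open>A' - A \<le> 2 * (c' - c)\<close> by (intro divide_right_mono) auto
  also have "\<dots> \<le> 3175/10000 * (c' - c)"
    using assms by (simp add: field_simps)
  finally show ?thesis
    by (simp add: A_def A'_def)
qed

lemma phi_diff_le:
  assumes "c \<in> {c_star..c_bar}" "c' \<in> {c_star..c_bar}" "c \<le> c'" "0 < t" "t < 1"
  shows "phi c t \<le> phi c' t + 235/1000 * (c' - c) * (1 / sqrt t + 1 / sqrt (1 - t))"
proof -
  define x x' A A' w where "x = (c - 1) * t" and "x' = (c' - 1) * t"
    and "A = c + 1 + x" and "A' = c' + 1 + x'" and "w = 1 / sqrt (t * (1 - t))"
  have "0 \<le> x" "x \<le> x'" "x' \<le> 1657/10000"
    using rho_argument_bounds[OF assms(1), of t] rho_argument_bounds[OF assms(2), of t] assms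
    by (auto simp: x_def x'_def mult_right_mono)
  then have rho: "0 \<le> rho x" "rho x \<le> rho x'" "rho x \<le> 74/100"
    using rho_nonneg rho_mono rho_le by auto
  have "0 < A" "A \<le> A'"
    using I_A_bounds[OF assms(1)] \<open>0 \<le> x\<close> \<open>x \<le> x'\<close> assms(3) by (auto simp: A_def A'_def)
  have "0 \<le> w" "w \<le> 1 / sqrt t + 1 / sqrt (1 - t)"
    using assms inverse_sqrt_mult_le[of t] by (auto simp: w_def)
  have "phi c t - phi c' t = rho x * w * (1 / sqrt A) - rho x' * w * (1 / sqrt A')"
    by (simp add: phi_def x_def x'_def A_def A'_def w_def real_sqrt_mult)
  also have "\<dots> \<le> rho x * w * (1 / sqrt A) - rho x * w * (1 / sqrt A')"
    using rho \<open>0 \<le> w\<close> \<open>0 < A\<close> \<open>A \<le> A'\<close> by (intro diff_left_mono mult_right_mono) auto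
  also have "\<dots> = rho x * w * (1 / sqrt A - 1 / sqrt A')"
    by (simp add: algebra_simps)
  also have "\<dots> \<le> 74/100 * (1 / sqrt t + 1 / sqrt (1 - t)) * (3175/10000 * (c' - c))"
    using rho \<open>0 \<le> w\<close> \<open>w \<le> 1 / sqrt t + 1 / sqrt (1 - t)\<close> \<open>0 < A\<close> \<open>A \<le> A'\<close>
      phi_denominator_diff_le[OF assms(1-3), of t] assms
    by (intro mult_mono) (auto simp: frac_le A_def A'_def x_def x'_def)
  also have "\<dots> \<le> 235/1000 * (c' - c) * (1 / sqrt t + 1 / sqrt (1 - t))"
  proof -
    have "74/100 * (3175/10000) * ((c' - c) * (1 / sqrt t + 1 / sqrt (1 - t)))
        \<le> 235/1000 * ((c' - c) * (1 / sqrt t + 1 / sqrt (1 - t)))"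
      using assms by (intro mult_right_mono) auto
    then show ?thesis
      by (simp only: mult_ac)
  qed
  finally show ?thesis
    by linarith
qed

lemma borel_measurable_K [measurable]: "K \<in> borel_measurable borel"
  unfolding K_def[abs_def] by measurable

lemma borel_measurable_rho [measurable]: "rho \<in> borel_measurable borel"
  unfolding rho_def[abs_def] by measurable

lemma borel_measurable_phi [measurable]: "phi c \<in> borel_measurable borel"
  unfolding phi_def[abs_def] by measurable

lemma borel_measurable_h2_integrand [measurable]: "h2_integrand c \<in> borel_measurable borel"
  unfolding h2_integrand_def[abs_def] by measurable

lemma nn_integral_reflect:
  fixes f :: "real \<Rightarrow> ennreal"
  assumes "f \<in> borel_measurable borel"
  shows "(\<integral>\<^sup>+x. f (c - x) \<partial>lborel) = (\<integral>\<^sup>+x. f x \<partial>lborel)"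
  using nn_integral_real_affine[OF assms, of "-1" c] by simp

lemma nn_integral_inverse_sqrt: "(\<integral>\<^sup>+x. ennreal (indicator {0..1} x * (1 / sqrt x)) \<partial>lborel) = 2"
proof -
  have "((\<lambda>x::real. x powr (-1/2)) has_integral 2) {0..1}"
    using has_integral_powr_from_0[of "-1/2" 1] by simp
  moreover have "x powr (-1/2) = 1 / sqrt x" if "x \<in> {0..1}" for x :: real
    using that by (cases "x = 0") (auto simp: powr_minus_divide powr_half_sqrt)
  ultimately have "((\<lambda>x::real. 1 / sqrt x) has_integral 2) {0..1}"
    by (rule has_integral_cong[THEN iffD1, rotated]) simp
  then show ?thesis
    using nn_integral_has_integral_lebesgue[of "{0..1}" "\<lambda>x. 1 / sqrt x"] by simp
qed

lemma nn_integral_inverse_sqrt_sum: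
  "(\<integral>\<^sup>+x. ennreal (indicator {0..1} x * (1 / sqrt x + 1 / sqrt (1 - x))) \<partial>lborel) = 4"
proof -
  let ?f = "\<lambda>x. ennreal (indicator {0..1} x * (1 / sqrt x))"
  have "ennreal (indicator {0..1} x * (1 / sqrt x + 1 / sqrt (1 - x))) = ?f x + ?f (1 - x)" for x :: real
    by (cases "x \<in> {0..1}") (auto simp: indicator_def ennreal_plus)
  then have "(\<integral>\<^sup>+x. ennreal (indicator {0..1} x * (1 / sqrt x + 1 / sqrt (1 - x))) \<partial>lborel)
      = (\<integral>\<^sup>+x. ?f x \<partial>lborel) + (\<integral>\<^sup>+x. ?f (1 - x) \<partial>lborel)"
    by (simp add: nn_integral_add)
  also have "(\<integral>\<^sup>+x. ?f (1 - x) \<partial>lborel) = (\<integral>\<^sup>+x. ?f x \<partial>lborel)"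
    by (rule nn_integral_reflect) measurable
  finally show ?thesis
    by (simp only: nn_integral_inverse_sqrt) simp
qed

(* A nonnegative integral, because phi c t blows up like 1/sqrt t and 1/sqrt (1 - t) at the ends. *)
definition Phi :: "real \<Rightarrow> ennreal" where
  "Phi c = (\<integral>\<^sup>+t. ennreal (indicator {0..1} t * phi c t) \<partial>lborel)"

lemma Phi_le:
  assumes "c \<in> {c_star..c_bar}"
  shows "Phi c \<le> 4"
proof -
  have "Phi c \<le> (\<integral>\<^sup>+t. ennreal (indicator {0..1} t * (1 / sqrt t + 1 / sqrt (1 - t))) \<partial>lborel)"
    unfolding Phi_def
  proof (intro nn_integral_mono ennreal_leI)
    fix t :: real
    show "indicator {0..1} t * phi c t \<le> indicator {0..1} t * (1 / sqrt t + 1 / sqrt (1 - t))"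
      using phi_le[OF assms, of t] phi_outside_open_unit_interval[of t c]
      by (cases "t \<in> {0<..<1}") (auto simp: indicator_def)
  qed
  then show ?thesis
    by (simp add: nn_integral_inverse_sqrt_sum)
qed

lemma Phi_diff_le:
  assumes "c \<in> {c_star..c_bar}" "c' \<in> {c_star..c_bar}" "c \<le> c'"
  shows "Phi c \<le> Phi c' + ennreal (94/100 * (c' - c))"
proof -
  define k where "k = 235/1000 * (c' - c)"
  let ?U = "\<lambda>t. indicator {0..1} t * (1 / sqrt t + 1 / sqrt (1 - t))"
  have "ennreal (indicator {0..1} t * phi c t)
      \<le> ennreal (indicator {0..1} t * phi c' t) + ennreal k * ennreal (?U t)" for t :: real
  proof (cases "t \<in> {0<..<1}")
    case True
    then have "0 \<le> phi c' t" "0 \<le> k" "0 \<le> ?U t"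
      using assms I_A_bounds[OF assms(2)] by (auto intro: phi_nonneg simp: k_def)
    have "indicator {0..1} t * phi c t \<le> indicator {0..1} t * phi c' t + k * ?U t"
      using True phi_diff_le[OF assms, of t] by (simp add: k_def)
    then have "ennreal (indicator {0..1} t * phi c t)
        \<le> ennreal (indicator {0..1} t * phi c' t + k * ?U t)"
      by (rule ennreal_leI)
    also have "\<dots> = ennreal (indicator {0..1} t * phi c' t) + ennreal k * ennreal (?U t)"
      using True \<open>0 \<le> phi c' t\<close> \<open>0 \<le> k\<close> \<open>0 \<le> ?U t\<close> by (simp add: ennreal_plus ennreal_mult)
    finally show ?thesis .
  qed (simp add: phi_outside_open_unit_interval)
  then have "Phi c \<le> (\<integral>\<^sup>+t. ennreal (indicator {0..1} t * phi c' t) + ennreal k * ennreal (?U t) \<partial>lborel)"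
    unfolding Phi_def by (rule nn_integral_mono)
  also have "\<dots> = Phi c' + ennreal k * (\<integral>\<^sup>+t. ennreal (?U t) \<partial>lborel)"
    unfolding Phi_def by (subst nn_integral_add) (auto simp: nn_integral_cmult)
  also have "\<dots> = Phi c' + ennreal k * ennreal 4"
    by (simp only: nn_integral_inverse_sqrt_sum ennreal_numeral)
  also have "ennreal k * ennreal 4 = ennreal (94/100 * (c' - c))"
    using assms by (subst ennreal_mult[symmetric]) (auto simp: k_def)
  finally show ?thesis .
qed

definition h1_integrand :: "real \<Rightarrow> real \<Rightarrow> real" where
  "h1_integrand c \<psi> = 1 / (1 - (R_minus_ext (c * sin \<psi>))^2)"

lemma borel_measurable_h1_integrand [measurable]: "h1_integrand c \<in> borel_measurable borel"
  unfolding h1_integrand_def[abs_def] by measurable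

lemma h1_integrand_nonneg: "0 \<le> h1_integrand c \<psi>"
  using R_minus_ext_bounds[of "c * sin \<psi>"] by (simp add: h1_integrand_def power_le_one)

lemma phi_rescaled:
  assumes "1 < c" "1 < s" "s < c"
  shows "phi c ((s - 1) / (c - 1)) = (c - 1) / ((1 - (R_minus s)^2) * sqrt (c^2 - s^2))"
proof -
  define t where "t = (s - 1) / (c - 1)"
  have "(c - 1) * t = s - 1"
    using assms by (simp add: t_def)
  then have "c + 1 + (c - 1) * t = c + s"
    by simp
  have "t * (1 - t) * (c + s) = (s - 1) * (c^2 - s^2) / (c - 1)^2"
    using assms by (simp add: t_def field_simps power2_eq_square)
  then have "sqrt (t * (1 - t) * (c + s)) = sqrt (s - 1) * sqrt (c^2 - s^2) / (c - 1)"
    using assms by (simp add: real_sqrt_mult real_sqrt_divide)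
  moreover have "rho ((c - 1) * t) = sqrt (s - 1) / (1 - (R_minus s)^2)"
    using assms \<open>(c - 1) * t = s - 1\<close> by (simp add: rho_def)
  ultimately have "phi c t = sqrt (s - 1) / (1 - (R_minus s)^2) / (sqrt (s - 1) * sqrt (c^2 - s^2) / (c - 1))"
    by (simp only: phi_def \<open>c + 1 + (c - 1) * t = c + s\<close>)
  also have "\<dots> = (c - 1) / ((1 - (R_minus s)^2) * sqrt (c^2 - s^2))"
  proof -
    have "0 < 1 - (R_minus s)^2"
      using R_minus_spec(1)[of s] R_minus_less_1[of s] assms by (simp add: abs_square_less_1)
    moreover have "0 < sqrt (c^2 - s^2)" "0 < sqrt (s - 1)"
      using assms by (simp_all add: power_strict_mono)
    ultimately show ?thesis
      using assms by (simp add: field_simps)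
  qed
  finally show ?thesis
    by (simp add: t_def)
qed

lemma phi_sin_substitution:
  assumes "c \<in> {c_star..c_bar}" "pi/3 < \<psi>" "\<psi> < pi/2"
  shows "phi c ((c * sin \<psi> - 1) / (c - 1)) * (c * cos \<psi> / (c - 1)) = h1_integrand c \<psi>"
proof -
  note bounds = I_A_bounds[OF assms(1)]
  have "0 < cos \<psi>"
    using assms by (intro cos_gt_zero_pi) auto
  have "sin (pi/3) < sin \<psi>" "sin \<psi> < sin (pi/2)"
    using assms by (intro sin_monotone_2pi; simp)+
  then have "sqrt 3 / 2 < sin \<psi>" "sin \<psi> < 1"
    by (simp_all add: sin_60)
  have "1 \<le> \<sigma> c"
    using bounds by simp
  also have "\<sigma> c < sin \<psi> * c"
    using \<open>sqrt 3 / 2 < sin \<psi>\<close> bounds by (intro mult_strict_right_mono) auto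
  finally have "1 < c * sin \<psi>"
    by (simp add: mult.commute)
  moreover have "c * sin \<psi> < c"
    using \<open>sin \<psi> < 1\<close> bounds by simp
  moreover have "c^2 - (c * sin \<psi>)^2 = (c * cos \<psi>)^2"
    by (simp add: power_mult_distrib cos_squared_eq algebra_simps)
  then have "sqrt (c^2 - (c * sin \<psi>)^2) = c * cos \<psi>"
    using \<open>0 < cos \<psi>\<close> bounds by simp
  ultimately show ?thesis
    using bounds \<open>0 < cos \<psi>\<close> by (simp add: phi_rescaled h1_integrand_def)
qed

lemma phi_K_substitution:
  assumes "c \<in> {c_star..c_bar}" "R_minus (\<sigma> c) < R" "R < 1"
  shows "phi c ((K R - 1) / (c - 1)) * (K R * (1 - R^2) / (R * (c - 1))) = h2_integrand c R"
proof -
  note bounds = I_A_bounds[OF assms(1)]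
  have "0 < R"
    using assms R_minus_spec(1)[of "\<sigma> c"] bounds by linarith
  have "0 < R_minus (\<sigma> c)" "K (R_minus (\<sigma> c)) = \<sigma> c"
    using R_minus_spec bounds by auto
  then have "1 < K R" "K R < \<sigma> c"
    using K_strict_decreasing[OF \<open>0 < R\<close> assms(3)] K_strict_decreasing[of "R_minus (\<sigma> c)" R] assms
    by auto
  moreover have "0 < 1 - R^2"
    using \<open>0 < R\<close> assms by (simp add: abs_square_less_1)
  ultimately show ?thesis
    using bounds \<open>0 < R\<close> assms
    by (simp add: phi_rescaled R_minus_K h2_integrand_def)
qed

lemma nn_integral_interval_split:
  fixes f :: "real \<Rightarrow> real"
  assumes "a \<le> m" "m \<le> b" "\<And>x. x \<in> {a..b} \<Longrightarrow> 0 \<le> f x"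
    and [measurable]: "f \<in> borel_measurable borel"
  shows "(\<integral>\<^sup>+x. ennreal (indicator {a..b} x * f x) \<partial>lborel)
    = (\<integral>\<^sup>+x. ennreal (indicator {a..m} x * f x) \<partial>lborel)
      + (\<integral>\<^sup>+x. ennreal (indicator {m..b} x * f x) \<partial>lborel)"
proof -
  have "AE x in lborel. ennreal (indicator {a..b} x * f x)
      = ennreal (indicator {a..m} x * f x) + ennreal (indicator {m..b} x * f x)"
    using AE_lborel_singleton[of m]
  proof eventually_elim
    case (elim x)
    then show ?case
      using assms by (cases "x < m") (auto simp: indicator_def)
  qed
  then have "(\<integral>\<^sup>+x. ennreal (indicator {a..b} x * f x) \<partial>lborel)
      = (\<integral>\<^sup>+x. ennreal (indicator {a..m} x * f x) + ennreal (indicator {m..b} x * f x) \<partial>lborel)"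
    by (rule nn_integral_cong_AE)
  also have "\<dots> = (\<integral>\<^sup>+x. ennreal (indicator {a..m} x * f x) \<partial>lborel)
      + (\<integral>\<^sup>+x. ennreal (indicator {m..b} x * f x) \<partial>lborel)"
    by (rule nn_integral_add) measurable
  finally show ?thesis .
qed

lemma nn_integral_phi_upper:
  assumes "c \<in> {c_star..c_bar}"
  shows "(\<integral>\<^sup>+t. ennreal (indicator {(\<sigma> c - 1) / (c - 1)..1} t * phi c t) \<partial>lborel)
    = (\<integral>\<^sup>+\<psi>. ennreal (indicator {pi/3..pi/2} \<psi> * h1_integrand c \<psi>) \<partial>lborel)"
proof -
  note bounds = I_A_bounds[OF assms]
  define g g' where "g = (\<lambda>\<psi>. (c * sin \<psi> - 1) / (c - 1))" and "g' = (\<lambda>\<psi>. c * cos \<psi> / (c - 1))"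
  have "g (pi/3) = (\<sigma> c - 1) / (c - 1)" "g (pi/2) = 1"
    using bounds by (simp_all add: g_def sin_60 mult.commute)
  then have "(\<integral>\<^sup>+t. ennreal (indicator {(\<sigma> c - 1) / (c - 1)..1} t * phi c t) \<partial>lborel)
      = (\<integral>\<^sup>+x. phi c x * indicator {g (pi/3)..g (pi/2)} x \<partial>lborel)"
    by (simp add: mult.commute)
  also have "\<dots> = (\<integral>\<^sup>+x. phi c (g x) * g' x * indicator {pi/3..pi/2} x \<partial>lborel)"
  proof (rule nn_integral_substitution)
    show "set_borel_measurable borel {g (pi/3)..g (pi/2)} (phi c)"
      unfolding set_borel_measurable_def by measurable
    show "(g has_real_derivative g' x) (at x)" for x
      unfolding g_def g'_def using bounds by (auto intro!: derivative_eq_intros)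
    show "continuous_on {pi/3..pi/2} g'"
      unfolding g'_def using bounds by (intro continuous_intros) auto
    show "0 \<le> g' x" if "x \<in> {pi/3..pi/2}" for x
      unfolding g'_def using that bounds by (intro divide_nonneg_pos mult_nonneg_nonneg cos_ge_zero) auto
  qed simp
  also have "\<dots> = (\<integral>\<^sup>+\<psi>. ennreal (indicator {pi/3..pi/2} \<psi> * h1_integrand c \<psi>) \<partial>lborel)"
  proof (rule nn_integral_cong_AE)
    show "AE x in lborel. ennreal (phi c (g x) * g' x * indicator {pi/3..pi/2} x)
        = ennreal (indicator {pi/3..pi/2} x * h1_integrand c x)"
      using AE_lborel_singleton[of "pi/3"] AE_lborel_singleton[of "pi/2"]
    proof eventually_elim
      case (elim x)
      then show ?case
        using phi_sin_substitution[OF assms, of x] by (cases "x \<in> {pi/3..pi/2}") (auto simp: g_def g'_def)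
    qed
  qed
  finally show ?thesis .
qed

lemma DERIV_K_reflected:
  assumes "x < 0" "c \<noteq> 1"
  shows "((\<lambda>u. (K (- u) - 1) / (c - 1)) has_real_derivative K (- x) * (1 - (- x)^2) / (- x * (c - 1))) (at x)"
proof -
  have "((\<lambda>u. K (- u)) has_real_derivative K (- x) * ((- x)^2 - 1) / (- x) * (- 1)) (at x)"
    using assms by (intro DERIV_chain2[where f = K and g = "\<lambda>u. - u", OF DERIV_K]) (auto intro!: derivative_eq_intros)
  from DERIV_cdivide[OF DERIV_diff[OF this DERIV_const[of 1]], of "c - 1"]
  show ?thesis
    by (rule DERIV_cong) (use assms in \<open>simp add: field_simps\<close>)
qed

lemma nn_integral_phi_lower:
  assumes "c \<in> {c_star..c_bar}"
  shows "(\<integral>\<^sup>+t. ennreal (indicator {0..(\<sigma> c - 1) / (c - 1)} t * phi c t) \<partial>lborel)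
    = (\<integral>\<^sup>+R. ennreal (indicator {R_minus (\<sigma> c)..1} R * h2_integrand c R) \<partial>lborel)"
proof -
  note bounds = I_A_bounds[OF assms]
  define m where "m = R_minus (\<sigma> c)"
  have m: "0 < m" "m \<le> 1" "K m = \<sigma> c"
    using R_minus_spec bounds by (auto simp: m_def)
  \<comment> \<open>t = (K R - 1)/(c - 1) decreases in R, so substitute in the variable u = - R\<close>
  define g g' where "g = (\<lambda>u. (K (- u) - 1) / (c - 1))"
    and "g' = (\<lambda>u. K (- u) * (1 - (- u)^2) / (- u * (c - 1)))"
  have "g (-1) = 0" "g (- m) = (\<sigma> c - 1) / (c - 1)"
    using m by (simp_all add: g_def)
  then have "(\<integral>\<^sup>+t. ennreal (indicator {0..(\<sigma> c - 1) / (c - 1)} t * phi c t) \<partial>lborel)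
      = (\<integral>\<^sup>+x. phi c x * indicator {g (-1)..g (- m)} x \<partial>lborel)"
    by (simp add: mult.commute)
  also have "\<dots> = (\<integral>\<^sup>+x. phi c (g x) * g' x * indicator {-1..- m} x \<partial>lborel)"
  proof (rule nn_integral_substitution)
    show "set_borel_measurable borel {g (-1)..g (- m)} (phi c)"
      unfolding set_borel_measurable_def by measurable
    show "(g has_real_derivative g' x) (at x)" if "x \<in> {-1..- m}" for x
      unfolding g_def g'_def using that m bounds by (intro DERIV_K_reflected) auto
    show "continuous_on {-1..- m} g'"
      unfolding g'_def using m bounds
      by (intro continuous_intros continuous_on_compose2[OF continuous_on_K[of m 1]]) auto
    show "0 \<le> g' x" if "x \<in> {-1..- m}" for x
    proof -
      have "0 < - x" "(- x)^2 \<le> 1"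
        using that m by (auto simp: abs_square_le_1)
      then show ?thesis
        unfolding g'_def using bounds K_pos[of "- x"]
        by (intro divide_nonneg_pos mult_nonneg_nonneg mult_pos_pos) auto
    qed
  qed (use m in simp)
  also have "\<dots> = (\<integral>\<^sup>+x. ennreal (indicator {m..1} (- x) * h2_integrand c (- x)) \<partial>lborel)"
  proof (rule nn_integral_cong_AE)
    show "AE x in lborel. ennreal (phi c (g x) * g' x * indicator {-1..- m} x)
        = ennreal (indicator {m..1} (- x) * h2_integrand c (- x))"
      using AE_lborel_singleton[of "-1"] AE_lborel_singleton[of "- m"]
    proof eventually_elim
      case (elim x)
      then show ?case
        using phi_K_substitution[OF assms, of "- x"]
        by (cases "x \<in> {-1..- m}") (auto simp: g_def g'_def m_def indicator_def)
    qed
  qed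
  also have "\<dots> = (\<integral>\<^sup>+R. ennreal (indicator {m..1} R * h2_integrand c R) \<partial>lborel)"
    using nn_integral_real_affine[of "\<lambda>R. ennreal (indicator {m..1} R * h2_integrand c R)" "-1" 0]
    by simp
  finally show ?thesis
    by (simp add: m_def)
qed

lemma nn_integral_eq_h2_left:
  assumes "c \<in> {c_star..c_bar}"
  shows "(\<integral>\<^sup>+R. ennreal (indicator {R_minus (\<sigma> c)..1} R * h2_integrand c R) \<partial>lborel) = ennreal (h2_left c)"
    and "0 \<le> h2_left c"
proof -
  note bounds = I_A_bounds[OF assms]
  have integrable: "h2_integrand c integrable_on {R_minus (\<sigma> c)..1}"
    by (rule h2_integrand_integrable[of "\<sigma> c"]) (use bounds R_plus_spec[of "\<sigma> c"] in auto)
  have nonneg: "0 \<le> h2_integrand c R" if "R \<in> {R_minus (\<sigma> c)..1}" for R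
  proof -
    have "0 < R"
      using that R_minus_spec(1)[of "\<sigma> c"] bounds by auto
    moreover have "K R \<le> \<sigma> c"
      using that bounds R_plus_spec(1)[of "\<sigma> c"] by (intro K_le_between_roots) auto
    ultimately show ?thesis
      using bounds by (intro h2_integrand_nonneg) auto
  qed
  show "(\<integral>\<^sup>+R. ennreal (indicator {R_minus (\<sigma> c)..1} R * h2_integrand c R) \<partial>lborel) = ennreal (h2_left c)"
    unfolding h2_left_def by (rule nn_integral_has_integral_lebesgue[OF nonneg integrable_integral[OF integrable]])
  show "0 \<le> h2_left c"
    unfolding h2_left_def using integrable nonneg by (intro integral_nonneg) auto
qed

definition h1_half :: "real \<Rightarrow> ennreal" where
  "h1_half c = (\<integral>\<^sup>+\<psi>. ennreal (indicator {pi/3..pi/2} \<psi> * h1_integrand c \<psi>) \<partial>lborel)"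

lemma Phi_eq:
  assumes "c \<in> {c_star..c_bar}"
  shows "Phi c = ennreal (h2_left c) + h1_half c"
proof -
  note bounds = I_A_bounds[OF assms]
  have "0 \<le> (\<sigma> c - 1) / (c - 1)" "(\<sigma> c - 1) / (c - 1) \<le> 1"
    using bounds by auto
  then have "Phi c = (\<integral>\<^sup>+t. ennreal (indicator {0..(\<sigma> c - 1) / (c - 1)} t * phi c t) \<partial>lborel)
      + (\<integral>\<^sup>+t. ennreal (indicator {(\<sigma> c - 1) / (c - 1)..1} t * phi c t) \<partial>lborel)"
    unfolding Phi_def using bounds by (intro nn_integral_interval_split phi_nonneg) auto
  then show ?thesis
    unfolding h1_half_def
    by (simp only: nn_integral_phi_lower[OF assms] nn_integral_phi_upper[OF assms]
        nn_integral_eq_h2_left(1)[OF assms])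
qed

lemma nn_integral_h1_integrand:
  "(\<integral>\<^sup>+\<psi>. ennreal (indicator {pi/3..2*pi/3} \<psi> * h1_integrand c \<psi>) \<partial>lborel) = 2 * h1_half c"
proof -
  have "(\<integral>\<^sup>+\<psi>. ennreal (indicator {pi/3..2*pi/3} \<psi> * h1_integrand c \<psi>) \<partial>lborel)
      = h1_half c + (\<integral>\<^sup>+\<psi>. ennreal (indicator {pi/2..2*pi/3} \<psi> * h1_integrand c \<psi>) \<partial>lborel)"
    unfolding h1_half_def by (rule nn_integral_interval_split) (auto simp: h1_integrand_nonneg)
  also have "(\<integral>\<^sup>+\<psi>. ennreal (indicator {pi/2..2*pi/3} \<psi> * h1_integrand c \<psi>) \<partial>lborel)
      = (\<integral>\<^sup>+\<psi>. ennreal (indicator {pi/3..pi/2} (pi - \<psi>) * h1_integrand c (pi - \<psi>)) \<partial>lborel)"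
  proof (rule nn_integral_cong)
    fix \<psi> :: real
    have "indicator {pi/2..2*pi/3} \<psi> = (indicator {pi/3..pi/2} (pi - \<psi>) :: real)"
      unfolding indicator_def by (simp add: algebra_simps) argo
    then show "ennreal (indicator {pi/2..2*pi/3} \<psi> * h1_integrand c \<psi>)
        = ennreal (indicator {pi/3..pi/2} (pi - \<psi>) * h1_integrand c (pi - \<psi>))"
      by (simp add: h1_integrand_def)
  qed
  also have "\<dots> = h1_half c"
    unfolding h1_half_def
    by (rule nn_integral_reflect[where f = "\<lambda>\<psi>. ennreal (indicator {pi/3..pi/2} \<psi> * h1_integrand c \<psi>)"])
      measurable
  finally show ?thesis
    by (simp only: mult_2)
qed

lemma sin_ge_sqrt_3_half:
  assumes "\<psi> \<in> {pi/3..2*pi/3}"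
  shows "sqrt 3 / 2 \<le> sin \<psi>"
proof (cases "\<psi> \<le> pi/2")
  case True
  then have "sin (pi/3) \<le> sin \<psi>"
    using assms by (intro sin_monotone_2pi_le) auto
  then show ?thesis
    by (simp add: sin_60)
next
  case False
  then have "sin (pi/3) \<le> sin (pi - \<psi>)"
    using assms by (intro sin_monotone_2pi_le) auto
  then show ?thesis
    by (simp add: sin_60)
qed

lemma h1_eq:
  assumes "c \<in> {c_star..c_bar}"
  shows "h1_half c = ennreal (h1 c / 2)" and "0 \<le> h1 c"
proof -
  note bounds = I_A_bounds[OF assms]
  have "h1_half c \<le> Phi c"
    using Phi_eq[OF assms] by simp
  then obtain a where a: "h1_half c = ennreal a" "0 \<le> a"
    using Phi_le[OF assms] by (cases "h1_half c") (auto simp: top_unique)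
  then have "((\<lambda>\<psi>. indicator {pi/3..2*pi/3} \<psi> * h1_integrand c \<psi>) has_integral 2 * a) UNIV"
    using nn_integral_h1_integrand[of c]
    by (intro nn_integral_has_integral) (auto simp: h1_integrand_nonneg ennreal_mult)
  then have "((\<lambda>\<psi>. if \<psi> \<in> {pi/3..2*pi/3} then h1_integrand c \<psi> else 0) has_integral 2 * a) UNIV"
    by (rule has_integral_cong[THEN iffD1, rotated]) (simp add: indicator_def)
  then have "(h1_integrand c has_integral 2 * a) {pi/3..2*pi/3}"
    by (simp only: has_integral_restrict_UNIV)
  moreover have "h1 c = integral {pi/3..2*pi/3} (h1_integrand c)"
    unfolding h1_def
  proof (rule integral_cong)
    fix \<psi> :: real assume "\<psi> \<in> {pi/3..2*pi/3}"
    then have "1 \<le> c * sin \<psi>"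
      using sin_ge_sqrt_3_half bounds order.trans[OF _ mult_left_mono[of "sqrt 3 / 2" "sin \<psi>" c]]
      by (simp add: mult.commute)
    then show "1 / (1 - (R_minus (c * sin \<psi>))^2) = h1_integrand c \<psi>"
      using bounds by (simp add: h1_integrand_def)
  qed
  ultimately have "h1 c = 2 * a"
    by (simp add: integral_unique)
  with a show "h1_half c = ennreal (h1 c / 2)" "0 \<le> h1 c"
    by simp_all
qed

lemma h1_half_add_h2_left_diff_le:
  assumes "c \<in> {c_star..c_bar}" "c' \<in> {c_star..c_bar}" "c \<le> c'"
  shows "h1 c / 2 + h2_left c \<le> h1 c' / 2 + h2_left c' + 94/100 * (c' - c)"
proof -
  have Phi: "Phi d = ennreal (h1 d / 2 + h2_left d)" "0 \<le> h1 d / 2 + h2_left d"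
    if "d \<in> {c_star..c_bar}" for d
    using Phi_eq[OF that] h1_eq[OF that] nn_integral_eq_h2_left(2)[OF that]
    by (simp_all add: ennreal_plus add.commute)
  have "ennreal (h1 c / 2 + h2_left c) \<le> ennreal (h1 c' / 2 + h2_left c') + ennreal (94/100 * (c' - c))"
    using Phi_diff_le[OF assms] Phi[OF assms(1)] Phi[OF assms(2)] by simp
  also have "\<dots> = ennreal (h1 c' / 2 + h2_left c' + 94/100 * (c' - c))"
    using Phi(2)[OF assms(2)] assms(3) by (intro ennreal_plus[symmetric]) auto
  finally show ?thesis
    using Phi(2)[OF assms(2)] assms(3) by (subst (asm) ennreal_le_iff) auto
qed

theorem mainTheorem14:
  shows "mono_on {c_star .. c_bar} (\<lambda>c. h1 c + 2 * h2 c) \<and> mono_on {c_star .. c_bar} h2"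
proof
  show "mono_on {c_star..c_bar} (\<lambda>c. h1 c + 2 * h2 c)"
  proof (rule mono_onI)
    fix c c' assume c: "c \<in> {c_star..c_bar}" "c' \<in> {c_star..c_bar}" "c \<le> c'"
    have "h1 c / 2 + h2_left c \<le> h1 c' / 2 + h2_left c' + 94/100 * (c' - c)"
      by (rule h1_half_add_h2_left_diff_le[OF c])
    moreover have "h2_right c + 2 * (c' - c) \<le> h2_right c'"
      by (rule h2_right_growth[OF c])
    moreover have "h2 c = h2_left c + h2_right c" "h2 c' = h2_left c' + h2_right c'"
      using c by (simp_all add: h2_eq_left_add_right)
    ultimately show "h1 c + 2 * h2 c \<le> h1 c' + 2 * h2 c'"
      using c(3) by argo
  qed
  show "mono_on {c_star..c_bar} h2"
    by (rule h2_mono)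
qed

end
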